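(* Let $\Sigma,\Gamma,\Delta$ be polynomial orbit-finite sets with $\Delta$ disjoint from $\Sigma$ and $\Gamma$. If $f:\Sigma^*\to\Gamma^*$ is a composition of primes then so are $\mathsf{map}_\Delta f$ and $\mathsf{sub}_\Delta f$; and if $f:(\Sigma+\Delta)^*\to\Gamma^*$ is a composition of primes then so is $\mathsf{map}'_\Delta f$.
   Context: Atoms $\mathbb A$ are a countably infinite set; polynomial orbit-finite sets are built from $\mathbb A$ and singletons by finite products and disjoint unions; equivariant means commuting with all bijections of $\mathbb A$. Compositions of primes: the smallest class containing (i) length-preserving homomorphisms lifting letterwise an equivariant function between polynomial orbit-finite sets, (ii) classical Mealy machine functions (finite alphabets and states, transition $Q\times\Sigma\to Q\times\Gamma$), (iii) atom propagation $(\mathbb A+\{\epsilon,\downarrow\})^*\to(\mathbb A+\bot)^*$ (position $i$ outputs the atom of position $j$ if $i$ is labelled $\downarrow$, $j<i$ carries an atom, and all positions strictly between are labelled $\epsilon$; otherwise $\bot$), closed under sequential composition and parallel composition $f_1|f_2:(\Sigma_1\times\Sigma_2)^*\to(\Gamma_1\times\Gamma_2)^*$. All such functions are length-preserving. Combinators, for $w_0,\dots,w_n\in\Sigma^*$ and $a_1,\dots,a_n\in\Delta$: $\mathsf{map}_\Delta f(w_0a_1w_1\cdots a_nw_n)=f(w_0)a_1f(w_1)\cdots a_nf(w_n)$; $\mathsf{sub}_\Delta f$ applies $f$ to $w_0w_1\cdots w_n$ and reinserts the separators $a_1,\dots,a_n$ at their original positions; $\mathsf{map}'_\Delta f(w_0a_1w_1\cdots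 a_nw_n)=f(w_0a_1)f(w_1a_2)\cdots f(w_{n-1}a_n)f(w_n)$. *)

theory Defs
  imports Main
begin

type_synonym atom = nat

datatype pof = PAtom | PUnit | PProd pof pof | PSum pof pof

text \<open>A universal type of values in which all polynomial orbit-finite sets live.\<close>
datatype val = VAtom atom | VUnit | VPair val val | VInl val | VInr val

fun elem :: "pof \<Rightarrow> val \<Rightarrow> bool" where
  "elem PAtom v = (\<exists>a. v = VAtom a)"
| "elem PUnit v = (v = VUnit)"
| "elem (PProd S T) v = (\<exists>x y. v = VPair x y \<and> elem S x \<and> elem T y)"
| "elem (PSum S T) v = ((\<exists>x. v = VInl x \<and> elem S x) \<or> (\<exists>y. v = VInr y \<and> elem T y))"

definition words :: "pof \<Rightarrow> val list set" where
  "words S = lists {x. elem S x}"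

fun act :: "(atom \<Rightarrow> atom) \<Rightarrow> val \<Rightarrow> val" where
  "act \<pi> (VAtom a) = VAtom (\<pi> a)"
| "act \<pi> VUnit = VUnit"
| "act \<pi> (VPair x y) = VPair (act \<pi> x) (act \<pi> y)"
| "act \<pi> (VInl x) = VInl (act \<pi> x)"
| "act \<pi> (VInr x) = VInr (act \<pi> x)"

definition equivariant_fun :: "pof \<Rightarrow> pof \<Rightarrow> (val \<Rightarrow> val) \<Rightarrow> bool" where
  "equivariant_fun S T h \<longleftrightarrow>
     (\<forall>x. elem S x \<longrightarrow> elem T (h x)) \<and>
     (\<forall>\<pi> x. bij \<pi> \<longrightarrow> elem S x \<longrightarrow> h (act \<pi> x) = act \<pi> (h x))"

text \<open>Finite (atom-free) polynomial sets: the classical finite alphabets.\<close>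
fun atomless :: "pof \<Rightarrow> bool" where
  "atomless PAtom = False"
| "atomless PUnit = True"
| "atomless (PProd S T) = (atomless S \<and> atomless T)"
| "atomless (PSum S T) = (atomless S \<and> atomless T)"

fun mealy :: "(nat \<Rightarrow> val \<Rightarrow> nat \<times> val) \<Rightarrow> nat \<Rightarrow> val list \<Rightarrow> val list" where
  "mealy \<delta> q [] = []"
| "mealy \<delta> q (x # xs) = snd (\<delta> q x) # mealy \<delta> (fst (\<delta> q x)) xs"

text \<open>Atom propagation, input alphabet A + {eps, down}, output A + bot.\<close>
definition eps :: val where "eps = VInr (VInl VUnit)"
definition down :: val where "down = VInr (VInr VUnit)"
definition bot :: val where "bot = VInr VUnit"

definition prop_src :: "val list \<Rightarrow> nat \<Rightarrow> nat \<Rightarrow> bool" where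
  "prop_src w i j \<longleftrightarrow> j < i \<and> (\<exists>a. w ! j = VInl (VAtom a)) \<and>
                       (\<forall>k. j < k \<and> k < i \<longrightarrow> w ! k = eps)"

definition propagate :: "val list \<Rightarrow> val list" where
  "propagate w = map (\<lambda>i. if w ! i = down \<and> (\<exists>j. prop_src w i j)
                           then w ! (THE j. prop_src w i j) else bot) [0..<length w]"

fun vfst :: "val \<Rightarrow> val" where "vfst (VPair x y) = x" | "vfst _ = VUnit"
fun vsnd :: "val \<Rightarrow> val" where "vsnd (VPair x y) = y" | "vsnd _ = VUnit"

definition par :: "(val list \<Rightarrow> val list) \<Rightarrow> (val list \<Rightarrow> val list) \<Rightarrow> val list \<Rightarrow> val list" where
  "par f1 f2 w = map2 VPair (f1 (map vfst w)) (f2 (map vsnd w))"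

text \<open>cp S T f: f, viewed as a function S* \<rightarrow> T*, is a composition of primes.
  Functions are identified when they agree on S*.\<close>
inductive cp :: "pof \<Rightarrow> pof \<Rightarrow> (val list \<Rightarrow> val list) \<Rightarrow> bool" where
  prime_hom: "equivariant_fun S T h \<Longrightarrow> cp S T (map h)"
| prime_mealy: "atomless S \<Longrightarrow> atomless T \<Longrightarrow> finite Q \<Longrightarrow> q0 \<in> Q \<Longrightarrow>
          (\<forall>q x. q \<in> Q \<longrightarrow> elem S x \<longrightarrow> fst (\<delta> q x) \<in> Q \<and> elem T (snd (\<delta> q x))) \<Longrightarrow>
          cp S T (mealy \<delta> q0)"
| prime_prop: "cp (PSum PAtom (PSum PUnit PUnit)) (PSum PAtom PUnit) propagate"
| comp_seq: "cp S T f \<Longrightarrow> cp T U g \<Longrightarrow> cp S U (g \<circ> f)"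
| comp_par: "cp S1 T1 f1 \<Longrightarrow> cp S2 T2 f2 \<Longrightarrow> cp (PProd S1 S2) (PProd T1 T2) (par f1 f2)"
| ext_dom: "cp S T f \<Longrightarrow> (\<forall>w \<in> words S. g w = f w) \<Longrightarrow> cp S T g"

section \<open>Combinators over S + D (tags: VInl for S-letters, VInr for D-letters)\<close>

fun isL :: "val \<Rightarrow> bool" where "isL (VInl x) = True" | "isL _ = False"
fun unL :: "val \<Rightarrow> val" where "unL (VInl x) = x" | "unL x = x"

text \<open>splitD w = ([w0,...,wn], [a1,...,an]) with w = w0 a1 w1 ... an wn.\<close>
fun splitD :: "val list \<Rightarrow> val list list \<times> val list" where
  "splitD [] = ([[]], [])"
| "splitD (x # xs) = (case splitD xs of (bs, as) \<Rightarrow>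
      if isL x then ((x # hd bs) # tl bs, as) else ([] # bs, x # as))"

definition mapD :: "(val list \<Rightarrow> val list) \<Rightarrow> val list \<Rightarrow> val list" where
  "mapD f w = (case splitD w of (bs, as) \<Rightarrow>
     map VInl (f (map unL (hd bs))) @
     concat (map2 (\<lambda>a b. a # map VInl (f (map unL b))) as (tl bs)))"

fun reinsert :: "val list \<Rightarrow> val list \<Rightarrow> val list" where
  "reinsert ys [] = []"
| "reinsert ys (x # xs) = (if isL x then VInl (hd ys) # reinsert (tl ys) xs
                           else x # reinsert ys xs)"

definition subD :: "(val list \<Rightarrow> val list) \<Rightarrow> val list \<Rightarrow> val list" where
  "subD f w = reinsert (f (map unL (filter isL w))) w"

definition mapD' :: "(val list \<Rightarrow> val list) \<Rightarrow> val list \<Rightarrow> val list" where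
  "mapD' f w = (case splitD w of (bs, as) \<Rightarrow>
     concat (map2 (\<lambda>b a. f (b @ [a])) bs as) @ f (last bs))"

end

theory Submission
  imports Defs
begin

(* All three combinators are one construction in disguise. Over the alphabet X + ((D + D) + X)
   a letter is a datum, a separator that is passed over, a separator that closes the current
   block, or a datum that closes its block; blockwise f applies f to the data of each block and
   writes the results back in place. By induction on compositions of primes, blockwise f is again
   a composition of primes: a homomorphism acts letterwise anyway, a Mealy machine or atom
   propagation only has to be run alongside the input and reset at block ends, and blockwise
   lifting commutes with sequential composition and with pairing (the two lifted runs have the
   same blocks). Finally map, sub and map' are blockwise f conjugated by letterwise re-taggings
   that turn their separators into closing separators, passed separators and closing data. *)

lemma elem_nonempty: "\<exists>v. elem S v"
  by (induction S) auto

lemma equivariant_funI: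
  assumes "\<And>x. elem S x \<Longrightarrow> elem T (h x)"
    and "\<And>\<pi> x. bij \<pi> \<Longrightarrow> elem S x \<Longrightarrow> h (act \<pi> x) = act \<pi> (h x)"
  shows "equivariant_fun S T h"
  using assms by (simp add: equivariant_fun_def)

lemma equivariant_fun_PProdI:
  assumes "\<And>x y. elem S x \<Longrightarrow> elem T y \<Longrightarrow> elem U (h (VPair x y))"
    and "\<And>\<pi> x y. bij \<pi> \<Longrightarrow> elem S x \<Longrightarrow> elem T y \<Longrightarrow>
      h (VPair (act \<pi> x) (act \<pi> y)) = act \<pi> (h (VPair x y))"
  shows "equivariant_fun (PProd S T) U h"
  using assms by (auto intro!: equivariant_funI)

lemma equivariant_vfst: "equivariant_fun (PProd S T) S vfst"
  and equivariant_vsnd: "equivariant_fun (PProd S T) T vsnd"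
  by (auto simp: equivariant_fun_def)

lemma equivariant_fun_id: "equivariant_fun S S id"
  by (simp add: equivariant_fun_def)

lemma words_simps [simp]:
  "[] \<in> words S"
  "x # xs \<in> words S \<longleftrightarrow> elem S x \<and> xs \<in> words S"
  "xs @ ys \<in> words S \<longleftrightarrow> xs \<in> words S \<and> ys \<in> words S"
  by (auto simp: words_def)

lemma cp_cong: "cp S T f \<Longrightarrow> (\<And>w. w \<in> words S \<Longrightarrow> g w = f w) \<Longrightarrow> cp S T g"
  by (rule ext_dom) auto

lemma cp_conjugate:
  assumes "cp S' T' g" "equivariant_fun S S' enc" "equivariant_fun T' T dec"
    and "\<And>w. w \<in> words S \<Longrightarrow> f w = map dec (g (map enc w))"
  shows "cp S T f"
  by (rule cp_cong[OF comp_seq[OF comp_seq[OF prime_hom[OF assms(2)] assms(1)] prime_hom[OF assms(3)]]])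
    (simp add: assms(4))

fun transduce :: "('s \<Rightarrow> val \<Rightarrow> 's \<times> val) \<Rightarrow> 's \<Rightarrow> val list \<Rightarrow> val list" where
  "transduce \<delta> q [] = []"
| "transduce \<delta> q (x # xs) = snd (\<delta> q x) # transduce \<delta> (fst (\<delta> q x)) xs"

fun final_state :: "('s \<Rightarrow> val \<Rightarrow> 's \<times> val) \<Rightarrow> 's \<Rightarrow> val list \<Rightarrow> 's" where
  "final_state \<delta> q [] = q"
| "final_state \<delta> q (x # xs) = final_state \<delta> (fst (\<delta> q x)) xs"

lemma transduce_append:
  "transduce \<delta> q (xs @ ys) = transduce \<delta> q xs @ transduce \<delta> (final_state \<delta> q xs) ys"
  by (induction xs arbitrary: q) auto

lemma final_state_append: "final_state \<delta> q (xs @ ys) = final_state \<delta> (final_state \<delta> q xs) ys"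
  by (induction xs arbitrary: q) auto

lemma length_transduce [simp]: "length (transduce \<delta> q xs) = length xs"
  by (induction xs arbitrary: q) auto

lemma mealy_eq_transduce: "mealy \<delta> q = transduce \<delta> q"
proof
  show "mealy \<delta> q w = transduce \<delta> q w" for w
    by (induction w arbitrary: q) auto
qed

lemma map_eq_transduce: "map h = transduce (\<lambda>(_::unit) x. ((), h x)) ()"
proof
  show "map h w = transduce (\<lambda>(_::unit) x. ((), h x)) () w" for w
    by (induction w) auto
qed

lemma transduce_words:
  assumes "\<And>q x. q \<in> I \<Longrightarrow> elem S x \<Longrightarrow> fst (\<delta> q x) \<in> I \<and> elem T (snd (\<delta> q x))"
    and "q \<in> I" "w \<in> words S"
  shows "transduce \<delta> q w \<in> words T"
  using assms(2,3) by (induction w arbitrary: q) (auto simp: assms(1))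

definition is_atom_letter :: "val \<Rightarrow> bool" where
  "is_atom_letter v \<longleftrightarrow> (\<exists>a. v = VInl (VAtom a))"

(* Atom propagation as a transducer whose state is the atom waiting to be propagated. *)
definition propagate_step :: "val option \<Rightarrow> val \<Rightarrow> val option \<times> val" where
  "propagate_step s x =
     (if is_atom_letter x then (Some x, bot)
      else if x = eps then (s, bot)
      else if x = down then (None, case s of Some v \<Rightarrow> v | None \<Rightarrow> bot)
      else (None, bot))"

lemma eps_down_distinct [simp]:
  "\<not> is_atom_letter eps" "\<not> is_atom_letter down" "eps \<noteq> down" "down \<noteq> eps"
  by (auto simp: is_atom_letter_def eps_def down_def)

lemma prop_src_unique: "prop_src w i j \<Longrightarrow> prop_src w i j' \<Longrightarrow> j = j'"
  unfolding prop_src_def by (metis eps_down_distinct(1) is_atom_letter_def linorder_neqE_nat)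

lemma the_prop_src: "prop_src w i j \<Longrightarrow> (THE j. prop_src w i j) = j"
  using prop_src_unique by blast

lemma prop_src_append: "i \<le> length w \<Longrightarrow> prop_src (w @ v) i = prop_src w i"
  by (auto simp: prop_src_def nth_append fun_eq_iff)

lemma prop_src_snoc:
  "prop_src (w @ [x]) (Suc (length w)) j \<longleftrightarrow>
     (if is_atom_letter x then j = length w else x = eps \<and> prop_src w (length w) j)"
proof (cases "j = length w")
  case True
  then show ?thesis by (auto simp: prop_src_def is_atom_letter_def)
next
  case False
  have "prop_src (w @ [x]) (Suc (length w)) j \<longleftrightarrow> x = eps \<and> prop_src w (length w) j"
    using False unfolding prop_src_def less_Suc_eq
    by (smt (verit, best) less_irrefl_nat nth_append_left nth_append_length)
  then show ?thesis
    using False by auto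
qed

definition pending_atom :: "val list \<Rightarrow> val option" where
  "pending_atom w =
     (if \<exists>j. prop_src w (length w) j then Some (w ! (THE j. prop_src w (length w) j)) else None)"

lemma pending_atom_snoc:
  "pending_atom (w @ [x]) = fst (propagate_step (pending_atom w) x)"
proof (cases "is_atom_letter x")
  case True
  then have "prop_src (w @ [x]) (length (w @ [x])) = (\<lambda>j. j = length w)"
    by (simp add: prop_src_snoc fun_eq_iff)
  then show ?thesis
    using True by (simp add: pending_atom_def propagate_step_def)
next
  case not_atom: False
  show ?thesis
  proof (cases "x = eps")
    case True
    then have src: "prop_src (w @ [x]) (length (w @ [x])) = prop_src w (length w)"
      using not_atom by (simp add: prop_src_snoc fun_eq_iff)
    have "prop_src w (length w) j \<Longrightarrow> (w @ [x]) ! j = w ! j" for j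
      by (simp add: prop_src_def nth_append)
    then have "pending_atom (w @ [x]) = pending_atom w"
      unfolding pending_atom_def src by (auto intro: theI2 prop_src_unique)
    then show ?thesis
      using True by (simp add: propagate_step_def)
  next
    case False
    then have "\<not> prop_src (w @ [x]) (length (w @ [x])) j" for j
      using not_atom by (simp add: prop_src_snoc)
    then show ?thesis
      using not_atom False by (auto simp: pending_atom_def propagate_step_def)
  qed
qed

lemma final_state_propagate_step: "final_state propagate_step None w = pending_atom w"
proof (induction w rule: rev_induct)
  case Nil
  show ?case by (simp add: pending_atom_def prop_src_def)
next
  case (snoc x w)
  then show ?case by (simp add: final_state_append pending_atom_snoc)
qed

lemma propagate_snoc:
  "propagate (w @ [x]) = propagate w @ [snd (propagate_step (pending_atom w) x)]"
proof -
  define out where "out w i =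
    (if w ! i = down \<and> (\<exists>j. prop_src w i j) then w ! (THE j. prop_src w i j) else bot)" for w i
  have out_prefix: "out (w @ [x]) i = out w i" if "i < length w" for i
  proof (cases "\<exists>j. prop_src w i j")
    case True
    then obtain j where j: "prop_src w i j" ..
    then have "j < length w"
      using that by (simp add: prop_src_def)
    then show ?thesis
      using that j the_prop_src[OF j] by (auto simp: out_def prop_src_append nth_append)
  next
    case False
    then show ?thesis
      using that by (simp add: out_def prop_src_append nth_append)
  qed
  have "out (w @ [x]) (length w) = snd (propagate_step (pending_atom w) x)"
  proof (cases "\<exists>j. prop_src w (length w) j")
    case True
    then obtain j where j: "prop_src w (length w) j" ..
    then have "j < length w"
      by (simp add: prop_src_def)
    then show ?thesis
      using j the_prop_src[OF j]
      by (auto simp: out_def pending_atom_def propagate_step_def prop_src_append nth_append)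
  next
    case False
    then show ?thesis
      by (simp add: out_def pending_atom_def propagate_step_def prop_src_append)
  qed
  moreover have "propagate v = map (out v) [0..<length v]" for v
    by (simp add: propagate_def out_def)
  ultimately show ?thesis
    using out_prefix by simp
qed

lemma propagate_eq_transduce: "propagate = transduce propagate_step None"
proof
  show "propagate w = transduce propagate_step None w" for w
  proof (induction w rule: rev_induct)
    case Nil
    show ?case by (simp add: propagate_def)
  next
    case (snoc x w)
    then show ?case
      by (simp add: propagate_snoc transduce_append final_state_propagate_step)
  qed
qed

lemma map2_VPair_words:
  "xs \<in> words S \<Longrightarrow> ys \<in> words T \<Longrightarrow> length xs = length ys \<Longrightarrow> map2 VPair xs ys \<in> words (PProd S T)"
proof (induction xs arbitrary: ys)
  case (Cons x xs)
  then show ?case by (cases ys) auto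
qed simp

lemma words_PProd: "w \<in> words (PProd S T) \<Longrightarrow> map vfst w \<in> words S \<and> map vsnd w \<in> words T"
  by (induction w) auto

lemma cp_imp_words:
  "cp S T f \<Longrightarrow> w \<in> words S \<Longrightarrow> length (f w) = length w \<and> f w \<in> words T"
proof (induction arbitrary: w rule: cp.induct)
  case (prime_hom S T h)
  then show ?case by (auto simp: equivariant_fun_def words_def)
next
  case (prime_mealy S T Q q0 \<delta>)
  then show ?case
    unfolding mealy_eq_transduce using transduce_words[of Q S \<delta> T q0 w] by auto
next
  case prime_prop
  let ?I = "{s. \<forall>v. s = Some v \<longrightarrow> elem (PSum PAtom PUnit) v}"
  have "transduce propagate_step None w \<in> words (PSum PAtom PUnit)"
    by (rule transduce_words[where I = ?I])
      (use prime_prop in \<open>auto simp: propagate_step_def bot_def is_atom_letter_def eps_def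
          down_def split: option.splits\<close>)
  then show ?case
    by (simp add: propagate_eq_transduce)
next
  case (comp_seq S T f U g)
  then show ?case by fastforce
next
  case (comp_par S1 T1 f1 S2 T2 f2)
  then show ?case
    using words_PProd map2_VPair_words by (fastforce simp: par_def)
next
  case (ext_dom S T f g)
  then show ?case by auto
qed

datatype letter_kind = Datum | Pass | Reset | Last_Datum

abbreviation block_alph :: "pof \<Rightarrow> pof \<Rightarrow> pof" where
  "block_alph X D \<equiv> PSum X (PSum (PSum D D) X)"

fun kind :: "val \<Rightarrow> letter_kind" where
  "kind (VInl x) = Datum"
| "kind (VInr (VInl (VInl d))) = Pass"
| "kind (VInr (VInl (VInr d))) = Reset"
| "kind (VInr (VInr x)) = Last_Datum"
| "kind _ = Pass"

definition carries_data :: "val \<Rightarrow> bool" where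
  "carries_data x \<longleftrightarrow> kind x = Datum \<or> kind x = Last_Datum"

definition ends_block :: "val \<Rightarrow> bool" where
  "ends_block x \<longleftrightarrow> kind x = Reset \<or> kind x = Last_Datum"

fun payload :: "val \<Rightarrow> val" where
  "payload (VInl x) = x"
| "payload (VInr (VInr x)) = x"
| "payload x = x"

definition retag :: "val \<Rightarrow> val \<Rightarrow> val" where
  "retag x y = (if kind x = Last_Datum then VInr (VInr y) else VInl y)"

definition data_of :: "val list \<Rightarrow> val list" where
  "data_of u = map payload (filter carries_data u)"

fun refill :: "val list \<Rightarrow> val list \<Rightarrow> val list" where
  "refill ys [] = []"
| "refill ys (x # xs) =
     (if carries_data x then retag x (hd ys) # refill (tl ys) xs else x # refill ys xs)"

definition block_apply :: "(val list \<Rightarrow> val list) \<Rightarrow> val list \<Rightarrow> val list" where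
  "block_apply f u = refill (f (data_of u)) u"

fun blockwise_acc :: "(val list \<Rightarrow> val list) \<Rightarrow> val list \<Rightarrow> val list \<Rightarrow> val list" where
  "blockwise_acc f acc [] = block_apply f acc"
| "blockwise_acc f acc (x # xs) =
     (if ends_block x then block_apply f (acc @ [x]) @ blockwise_acc f [] xs
      else blockwise_acc f (acc @ [x]) xs)"

definition blockwise :: "(val list \<Rightarrow> val list) \<Rightarrow> val list \<Rightarrow> val list" where
  "blockwise f w = blockwise_acc f [] w"

lemma elem_block_alph_cases:
  assumes "elem (block_alph X D) x"
  obtains (datum) a where "x = VInl a" "elem X a"
  | (pass) d where "x = VInr (VInl (VInl d))" "elem D d"
  | (reset) d where "x = VInr (VInl (VInr d))" "elem D d"
  | (last_datum) a where "x = VInr (VInr a)" "elem X a"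
  using assms by auto

lemma kind_retag [simp]: "kind (retag x y) = (if kind x = Last_Datum then Last_Datum else Datum)"
  by (simp add: retag_def)

lemma payload_retag [simp]: "payload (retag x y) = y"
  by (simp add: retag_def)

lemma carries_data_retag [simp]: "carries_data (retag x y)"
  by (simp add: carries_data_def)

lemma retag_retag [simp]: "retag (retag x y) z = retag x z"
  by (simp add: retag_def)

lemma length_refill [simp]: "length (refill ys u) = length u"
  by (induction u arbitrary: ys) auto

lemma kind_refill: "map kind (refill ys u) = map kind u"
  by (induction u arbitrary: ys) (auto simp: carries_data_def)

lemma refill_append:
  "refill ys (u @ v) = refill ys u @ refill (drop (length (data_of u)) ys) v"
  by (induction u arbitrary: ys) (auto simp: data_of_def drop_Suc tl_drop)

lemma refill_append_ignored:
  "length ys = length (data_of u) \<Longrightarrow> refill (ys @ zs) u = refill ys u"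
proof (induction u arbitrary: ys)
  case (Cons x u)
  show ?case
  proof (cases "carries_data x")
    case True
    then show ?thesis using Cons by (cases ys) (auto simp: data_of_def)
  next
    case False
    then show ?thesis using Cons by (simp add: data_of_def)
  qed
qed simp

lemma data_of_refill: "length ys = length (data_of u) \<Longrightarrow> data_of (refill ys u) = ys"
proof (induction u arbitrary: ys)
  case (Cons x u)
  then show ?case by (cases ys) (auto simp: data_of_def)
qed (simp add: data_of_def)

lemma refill_refill [simp]: "refill zs (refill ys u) = refill zs u"
  by (induction u arbitrary: ys zs) auto

lemma blockwise_acc_inside_block:
  "\<forall>x\<in>set u. \<not> ends_block x \<Longrightarrow> blockwise_acc f acc (u @ rest) = blockwise_acc f (acc @ u) rest"
  by (induction u arbitrary: acc) auto

lemma blockwise_last_block: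
  "\<forall>x\<in>set u. \<not> ends_block x \<Longrightarrow> blockwise f u = block_apply f u"
  using blockwise_acc_inside_block[of u f "[]" "[]"] by (simp add: blockwise_def)

lemma blockwise_block_end:
  "\<forall>x\<in>set u. \<not> ends_block x \<Longrightarrow> ends_block r \<Longrightarrow>
     blockwise f (u @ r # rest) = block_apply f (u @ [r]) @ blockwise f rest"
  using blockwise_acc_inside_block[of u f "[]" "r # rest"] by (simp add: blockwise_def)

lemma blocks_induct:
  assumes last_block: "\<And>u. \<forall>x\<in>set u. p x \<Longrightarrow> P u"
    and block_end: "\<And>u a rest. \<forall>x\<in>set u. p x \<Longrightarrow> \<not> p a \<Longrightarrow> P rest \<Longrightarrow> P (u @ a # rest)"
  shows "P w"
proof (induction "length w" arbitrary: w rule: less_induct)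
  case less
  show ?case
  proof (cases "dropWhile p w")
    case Nil
    then have "w = takeWhile p w"
      by (metis append_Nil2 takeWhile_dropWhile_id)
    then show ?thesis
      using last_block by (metis set_takeWhileD)
  next
    case (Cons a rest)
    then have w: "w = takeWhile p w @ a # rest" and "\<not> p a"
      by (auto simp: dropWhile_eq_Cons_conv)
    moreover have "length rest < length w"
      by (subst w) simp
    then have "P rest"
      using less by blast
    ultimately show ?thesis
      using block_end set_takeWhileD by metis
  qed
qed

lemma data_of_words: "u \<in> words (block_alph X D) \<Longrightarrow> data_of u \<in> words X"
  by (induction u) (auto simp: data_of_def carries_data_def)

definition reset_at_ends :: "('s \<Rightarrow> val \<Rightarrow> 's \<times> val) \<Rightarrow> 's \<Rightarrow> 's \<Rightarrow> val \<Rightarrow> 's \<times> val" where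
  "reset_at_ends \<delta> q0 q x = (case kind x of
      Datum \<Rightarrow> (fst (\<delta> q (payload x)), retag x (snd (\<delta> q (payload x))))
    | Last_Datum \<Rightarrow> (q0, retag x (snd (\<delta> q (payload x))))
    | Reset \<Rightarrow> (q0, x)
    | Pass \<Rightarrow> (q, x))"

lemma transduce_reset_at_ends_in_block:
  assumes "\<forall>x\<in>set u. \<not> ends_block x"
  shows "transduce (reset_at_ends \<delta> q0) q u = refill (transduce \<delta> q (data_of u)) u
    \<and> final_state (reset_at_ends \<delta> q0) q u = final_state \<delta> q (data_of u)"
  using assms
proof (induction u arbitrary: q)
  case (Cons x u)
  then show ?case
    by (cases "kind x") (auto simp: reset_at_ends_def data_of_def carries_data_def ends_block_def)
qed (simp add: data_of_def)

lemma reset_at_ends_block_end: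
  assumes "ends_block r"
  shows "refill (transduce \<delta> q (data_of [r])) [r] = [snd (reset_at_ends \<delta> q0 q r)]"
    and "fst (reset_at_ends \<delta> q0 q r) = q0"
  using assms
  by (cases "kind r"; simp add: reset_at_ends_def data_of_def ends_block_def carries_data_def)+

lemma blockwise_transduce: "blockwise (transduce \<delta> q0) = transduce (reset_at_ends \<delta> q0) q0"
proof
  fix w
  show "blockwise (transduce \<delta> q0) w = transduce (reset_at_ends \<delta> q0) q0 w"
  proof (induction w rule: blocks_induct[where p = "\<lambda>x. \<not> ends_block x"])
    case (1 u)
    then show ?case
      using transduce_reset_at_ends_in_block[of u \<delta> q0 q0]
      by (simp add: blockwise_last_block block_apply_def)
  next
    case (2 u r rest)
    then have r: "ends_block r"
      by simp
    note in_block = transduce_reset_at_ends_in_block[OF 2(1), of \<delta> q0 q0]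
    let ?q = "final_state \<delta> q0 (data_of u)"
    have "block_apply (transduce \<delta> q0) (u @ [r]) =
        refill (transduce \<delta> q0 (data_of u)) u @ refill (transduce \<delta> ?q (data_of [r])) [r]"
      by (simp add: block_apply_def data_of_def transduce_append refill_append refill_append_ignored)
    also have "\<dots> = transduce (reset_at_ends \<delta> q0) q0 (u @ [r])"
      using in_block reset_at_ends_block_end(1)[OF r, of \<delta> ?q q0]
      by (simp add: transduce_append del: refill.simps)
    finally have block:
      "block_apply (transduce \<delta> q0) (u @ [r]) = transduce (reset_at_ends \<delta> q0) q0 (u @ [r])" .
    have "final_state (reset_at_ends \<delta> q0) q0 (u @ [r]) = q0"
      using reset_at_ends_block_end(2)[OF r] by (simp add: final_state_append)
    then show ?case
      using transduce_append[of _ q0 "u @ [r]" rest] block 2(1,3) r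
      by (simp add: blockwise_block_end)
  qed
qed

lemma cp_alongside:
  assumes g: "cp S' T' g"
    and pre: "equivariant_fun S S' pre"
    and post: "equivariant_fun (PProd S T') T post"
  shows "cp S T (\<lambda>w. map post (map2 VPair w (g (map pre w))))"
proof -
  have pair: "cp S (PProd S S') (map (\<lambda>x. VPair x (pre x)))"
    using pre by (intro prime_hom equivariant_funI) (auto simp: equivariant_fun_def)
  have beside: "cp (PProd S S') (PProd S T') (par (map id) g)"
    by (rule comp_par[OF prime_hom[OF equivariant_fun_id] g])
  have "cp S T (map post \<circ> (par (map id) g \<circ> map (\<lambda>x. VPair x (pre x))))"
    by (rule comp_seq[OF comp_seq[OF pair beside] prime_hom[OF post]])
  moreover have "map post \<circ> (par (map id) g \<circ> map (\<lambda>x. VPair x (pre x))) =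
      (\<lambda>w. map post (map2 VPair w (g (map pre w))))"
    by (simp add: fun_eq_iff par_def comp_def)
  ultimately show ?thesis
    by simp
qed

definition map_payload :: "(val \<Rightarrow> val) \<Rightarrow> val \<Rightarrow> val" where
  "map_payload h x = (if carries_data x then retag x (h (payload x)) else x)"

lemma blockwise_map: "blockwise (map h) = map (map_payload h)"
proof
  show "blockwise (map h) w = map (map_payload h) w" for w
    unfolding map_eq_transduce blockwise_transduce
    by (induction w) (auto simp: reset_at_ends_def map_payload_def carries_data_def
        split: letter_kind.split)
qed

lemma equivariant_map_payload:
  assumes "equivariant_fun S T h"
  shows "equivariant_fun (block_alph S D) (block_alph T D) (map_payload h)"
  by (rule equivariant_funI; erule elem_block_alph_cases)
    (use assms in \<open>auto simp: map_payload_def carries_data_def retag_def equivariant_fun_def\<close>)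

lemma cp_blockwise_map:
  "equivariant_fun S T h \<Longrightarrow> cp (block_alph S D) (block_alph T D) (blockwise (map h))"
  unfolding blockwise_map by (intro prime_hom equivariant_map_payload)

definition erase_separator :: "val \<Rightarrow> val" where
  "erase_separator x = (case kind x of
      Pass \<Rightarrow> VInr (VInl (VInl VUnit))
    | Reset \<Rightarrow> VInr (VInl (VInr VUnit))
    | _ \<Rightarrow> x)"

definition merge_output :: "val \<Rightarrow> val" where
  "merge_output v = (if carries_data (vfst v) then retag (vfst v) (vsnd v) else vfst v)"

(* The output y at separators is discarded by merge_output; it only has to lie in the output
   alphabet. *)
definition mealy_with_resets ::
    "(nat \<Rightarrow> val \<Rightarrow> nat \<times> val) \<Rightarrow> nat \<Rightarrow> val \<Rightarrow> nat \<Rightarrow> val \<Rightarrow> nat \<times> val" where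
  "mealy_with_resets \<delta> q0 y0 q x = (case kind x of
      Datum \<Rightarrow> \<delta> q (payload x)
    | Last_Datum \<Rightarrow> (q0, snd (\<delta> q (payload x)))
    | Reset \<Rightarrow> (q0, y0)
    | Pass \<Rightarrow> (q, y0))"

lemma transduce_reset_at_ends_mealy:
  "transduce (reset_at_ends \<delta> q0) q w =
     map merge_output (map2 VPair w (transduce (mealy_with_resets \<delta> q0 y) q (map erase_separator w)))"
  by (induction w arbitrary: q) (auto simp: reset_at_ends_def mealy_with_resets_def
      erase_separator_def merge_output_def carries_data_def split: letter_kind.split)

lemma cp_blockwise_mealy:
  assumes "atomless X" "atomless Y" "finite Q" "q0 \<in> Q"
    and \<delta>: "\<forall>q x. q \<in> Q \<longrightarrow> elem X x \<longrightarrow> fst (\<delta> q x) \<in> Q \<and> elem Y (snd (\<delta> q x))"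
  shows "cp (block_alph X D) (block_alph Y D) (blockwise (mealy \<delta> q0))"
proof -
  obtain y0 where y0: "elem Y y0"
    using elem_nonempty by blast
  have "cp (block_alph X PUnit) Y (mealy (mealy_with_resets \<delta> q0 y0) q0)"
  proof (rule prime_mealy)
    show "\<forall>q x. q \<in> Q \<longrightarrow> elem (block_alph X PUnit) x \<longrightarrow>
        fst (mealy_with_resets \<delta> q0 y0 q x) \<in> Q \<and> elem Y (snd (mealy_with_resets \<delta> q0 y0 q x))"
      using \<delta> y0 \<open>q0 \<in> Q\<close> by (auto simp: mealy_with_resets_def)
  qed (use assms in auto)
  moreover have "equivariant_fun (block_alph X D) (block_alph X PUnit) erase_separator"
    by (rule equivariant_funI; erule elem_block_alph_cases) (auto simp: erase_separator_def)
  moreover have "equivariant_fun (PProd (block_alph X D) Y) (block_alph Y D) merge_output"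
    by (rule equivariant_fun_PProdI; erule elem_block_alph_cases)
      (auto simp: merge_output_def carries_data_def retag_def)
  ultimately show ?thesis
    unfolding mealy_eq_transduce blockwise_transduce transduce_reset_at_ends_mealy[where y = y0]
    by (rule cp_alongside)
qed

definition propagate_input :: "val \<Rightarrow> val" where
  "propagate_input x = (case kind x of Datum \<Rightarrow> payload x | Pass \<Rightarrow> eps | _ \<Rightarrow> down)"

(* A block-ending datum is fed to atom propagation as down, which also clears the pending
   atom; the output is then kept only if the datum really was down. *)
definition merge_propagated :: "val \<Rightarrow> val" where
  "merge_propagated v =
     (if carries_data (vfst v)
      then retag (vfst v)
        (if kind (vfst v) = Last_Datum \<and> payload (vfst v) \<noteq> down then bot else vsnd v)
      else vfst v)"

lemma transduce_reset_at_ends_propagate: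
  "transduce (reset_at_ends propagate_step None) s w =
     map merge_propagated (map2 VPair w (transduce propagate_step s (map propagate_input w)))"
proof (induction w arbitrary: s)
  case (Cons x w)
  have "x \<noteq> down \<Longrightarrow> snd (propagate_step s x) = bot" for s x
    by (simp add: propagate_step_def)
  then show ?case
    using Cons by (cases "kind x") (auto simp: reset_at_ends_def propagate_input_def
        merge_propagated_def carries_data_def propagate_step_def[of _ eps]
        propagate_step_def[of _ down])
qed simp

lemma cp_blockwise_propagate:
  "cp (block_alph (PSum PAtom (PSum PUnit PUnit)) D) (block_alph (PSum PAtom PUnit) D)
      (blockwise propagate)"
proof -
  have "equivariant_fun (block_alph (PSum PAtom (PSum PUnit PUnit)) D) (PSum PAtom (PSum PUnit PUnit))
      propagate_input"
    by (rule equivariant_funI; erule elem_block_alph_cases)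
      (auto simp: propagate_input_def eps_def down_def)
  moreover have "equivariant_fun (PProd (block_alph (PSum PAtom (PSum PUnit PUnit)) D) (PSum PAtom PUnit))
      (block_alph (PSum PAtom PUnit) D) merge_propagated"
    by (rule equivariant_fun_PProdI; erule elem_block_alph_cases)
      (auto simp: merge_propagated_def carries_data_def retag_def bot_def down_def)
  ultimately show ?thesis
    unfolding propagate_eq_transduce blockwise_transduce transduce_reset_at_ends_propagate
    by (rule cp_alongside[OF prime_prop[unfolded propagate_eq_transduce]])
qed

lemma ends_block_refill:
  assumes "\<forall>x\<in>set u. \<not> ends_block x"
  shows "\<forall>x\<in>set (refill ys u). \<not> ends_block x"
proof -
  have "kind ` set (refill ys u) = kind ` set u"
    by (metis kind_refill list.set_map)
  then show ?thesis
    using assms unfolding ends_block_def by (metis imageE imageI)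
qed

lemma refill_block_end:
  assumes "\<forall>x\<in>set u. \<not> ends_block x" "ends_block r"
  obtains u' r' where "refill ys (u @ [r]) = u' @ [r']" "\<forall>x\<in>set u'. \<not> ends_block x" "ends_block r'"
proof -
  let ?zs = "drop (length (data_of u)) ys"
  obtain r' where r': "refill ?zs [r] = [r']"
    using length_refill[of ?zs "[r]"] by (cases "refill ?zs [r]") (auto simp del: refill.simps)
  have "kind r' = kind r"
    using kind_refill[of ?zs "[r]"] r' by (simp del: refill.simps)
  show ?thesis
  proof
    show "refill ys (u @ [r]) = refill ys u @ [r']"
      using r' by (simp add: refill_append)
    show "\<forall>x\<in>set (refill ys u). \<not> ends_block x"
      using assms(1) by (rule ends_block_refill)
    show "ends_block r'"
      using assms(2) \<open>kind r' = kind r\<close> by (simp add: ends_block_def)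
  qed
qed

lemma block_apply_comp:
  "length (f (data_of u)) = length (data_of u) \<Longrightarrow>
     block_apply g (block_apply f u) = block_apply (g \<circ> f) u"
  by (simp add: block_apply_def data_of_refill)

lemma blockwise_comp:
  assumes f: "cp X Y f"
  shows "w \<in> words (block_alph X D) \<Longrightarrow> blockwise (g \<circ> f) w = blockwise g (blockwise f w)"
proof (induction w rule: blocks_induct[where p = "\<lambda>x. \<not> ends_block x"])
  case (1 u)
  have "length (f (data_of u)) = length (data_of u)"
    using cp_imp_words[OF f data_of_words[OF 1(2)]] by simp
  moreover have "\<forall>x\<in>set (block_apply f u). \<not> ends_block x"
    using ends_block_refill[OF 1(1)] by (simp add: block_apply_def)
  ultimately show ?case
    using 1(1) by (simp add: blockwise_last_block block_apply_comp comp_def)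
next
  case (2 u r rest)
  then have u: "\<forall>x\<in>set u. \<not> ends_block x" and r: "ends_block r"
    and rest: "rest \<in> words (block_alph X D)" and ur: "u @ [r] \<in> words (block_alph X D)"
    by auto
  have len: "length (f (data_of (u @ [r]))) = length (data_of (u @ [r]))"
    using cp_imp_words[OF f data_of_words[OF ur]] by simp
  obtain u' r' where split: "block_apply f (u @ [r]) = u' @ [r']"
    and u': "\<forall>x\<in>set u'. \<not> ends_block x" and r': "ends_block r'"
    using refill_block_end[OF u r] unfolding block_apply_def by metis
  have "blockwise g (blockwise f (u @ r # rest)) = blockwise g (u' @ r' # blockwise f rest)"
    using split by (simp add: blockwise_block_end[OF u r])
  also have "\<dots> = block_apply g (block_apply f (u @ [r])) @ blockwise g (blockwise f rest)"
    using split by (simp add: blockwise_block_end[OF u' r'])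
  also have "\<dots> = blockwise (g \<circ> f) (u @ r # rest)"
    using 2(3)[OF rest] by (simp add: blockwise_block_end[OF u r] block_apply_comp[where f = f, OF len] comp_def)
  finally show ?case ..
qed

lemma blockwise_cong:
  assumes "\<forall>w\<in>words X. g w = f w"
  shows "w \<in> words (block_alph X D) \<Longrightarrow> blockwise g w = blockwise f w"
proof (induction w rule: blocks_induct[where p = "\<lambda>x. \<not> ends_block x"])
  case (1 u)
  then show ?case
    using assms data_of_words[OF 1(2)] by (simp add: blockwise_last_block block_apply_def)
next
  case (2 u r rest)
  then have "data_of (u @ [r]) \<in> words X"
    using data_of_words[of "u @ [r]" X D] by simp
  then show ?case
    using 2 assms by (simp add: blockwise_block_end block_apply_def)
qed

definition pair_letters :: "val \<Rightarrow> val" where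
  "pair_letters v =
     (if carries_data (vfst v) \<and> carries_data (vsnd v)
      then retag (vfst v) (VPair (payload (vfst v)) (payload (vsnd v)))
      else if carries_data (vfst v) then vsnd v else vfst v)"

lemma pair_letters_retag [simp]:
  "carries_data x \<Longrightarrow> pair_letters (VPair (retag x a) (retag x b)) = retag x (VPair a b)"
  by (simp add: pair_letters_def)

lemma pair_letters_same [simp]: "\<not> carries_data x \<Longrightarrow> pair_letters (VPair x x) = x"
  by (simp add: pair_letters_def)

lemma refill_map2_VPair:
  "length ys1 = length (data_of u) \<Longrightarrow> length ys2 = length (data_of u) \<Longrightarrow>
     refill (map2 VPair ys1 ys2) u = map pair_letters (map2 VPair (refill ys1 u) (refill ys2 u))"
proof (induction u arbitrary: ys1 ys2)
  case (Cons x u)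
  show ?case
  proof (cases "carries_data x")
    case True
    then show ?thesis
      using Cons by (cases ys1; cases ys2) (auto simp: data_of_def)
  next
    case False
    then show ?thesis
      using Cons by (simp add: data_of_def)
  qed
qed simp

lemma blockwise_zip:
  assumes g1: "cp X Y1 g1" and g2: "cp X Y2 g2"
  shows "w \<in> words (block_alph X D) \<Longrightarrow>
    blockwise (\<lambda>v. map2 VPair (g1 v) (g2 v)) w =
      map pair_letters (map2 VPair (blockwise g1 w) (blockwise g2 w))"
proof (induction w rule: blocks_induct[where p = "\<lambda>x. \<not> ends_block x"])
  case (1 u)
  then show ?case
    using cp_imp_words[OF g1 data_of_words[OF 1(2)]] cp_imp_words[OF g2 data_of_words[OF 1(2)]]
    by (simp add: blockwise_last_block block_apply_def refill_map2_VPair)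
next
  case (2 u r rest)
  then have u: "\<forall>x\<in>set u. \<not> ends_block x" and r: "ends_block r"
    and rest: "rest \<in> words (block_alph X D)" and ur: "data_of (u @ [r]) \<in> words X"
    by (auto intro: data_of_words)
  show ?case
    using cp_imp_words[OF g1 ur] cp_imp_words[OF g2 ur] 2(3)[OF rest]
    by (simp add: blockwise_block_end[OF u r] block_apply_def refill_map2_VPair)
qed

definition split_letter :: "val \<Rightarrow> val" where
  "split_letter x = VPair (map_payload vfst x) (map_payload vsnd x)"

lemma cp_blockwise_par:
  assumes f1: "cp S1 T1 f1" and f2: "cp S2 T2 f2"
    and blockwise_f1: "cp (block_alph S1 D) (block_alph T1 D) (blockwise f1)"
    and blockwise_f2: "cp (block_alph S2 D) (block_alph T2 D) (blockwise f2)"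
  shows "cp (block_alph (PProd S1 S2) D) (block_alph (PProd T1 T2) D) (blockwise (par f1 f2))"
proof -
  have "equivariant_fun (block_alph (PProd S1 S2) D) (PProd (block_alph S1 D) (block_alph S2 D))
      split_letter"
    by (rule equivariant_funI; erule elem_block_alph_cases)
      (auto simp: split_letter_def map_payload_def carries_data_def retag_def)
  moreover have "equivariant_fun (PProd (block_alph T1 D) (block_alph T2 D))
      (block_alph (PProd T1 T2) D) pair_letters"
    by (rule equivariant_fun_PProdI; erule elem_block_alph_cases; erule elem_block_alph_cases)
      (auto simp: pair_letters_def carries_data_def retag_def)
  ultimately have "cp (block_alph (PProd S1 S2) D) (block_alph (PProd T1 T2) D)
      (map pair_letters \<circ> (par (blockwise f1) (blockwise f2) \<circ> map split_letter))"
    using blockwise_f1 blockwise_f2 by (blast intro: prime_hom comp_par comp_seq)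
  then show ?thesis
  proof (rule cp_cong)
    fix w
    assume w: "w \<in> words (block_alph (PProd S1 S2) D)"
    have fst_comp: "cp (PProd S1 S2) T1 (f1 \<circ> map vfst)"
      and snd_comp: "cp (PProd S1 S2) T2 (f2 \<circ> map vsnd)"
      by (blast intro: comp_seq prime_hom equivariant_vfst equivariant_vsnd f1 f2)+
    have "blockwise (par f1 f2) w =
        blockwise (\<lambda>v. map2 VPair ((f1 \<circ> map vfst) v) ((f2 \<circ> map vsnd) v)) w"
      by (simp add: par_def[abs_def])
    also have "\<dots> = map pair_letters (map2 VPair (blockwise (f1 \<circ> map vfst) w)
        (blockwise (f2 \<circ> map vsnd) w))"
      by (rule blockwise_zip[OF fst_comp snd_comp w])
    also have "\<dots> = map pair_letters (map2 VPair (blockwise f1 (map (map_payload vfst) w))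
        (blockwise f2 (map (map_payload vsnd) w)))"
      using blockwise_comp[OF prime_hom[OF equivariant_vfst] w, of f1]
        blockwise_comp[OF prime_hom[OF equivariant_vsnd] w, of f2]
      by (simp add: blockwise_map)
    finally show "blockwise (par f1 f2) w =
        (map pair_letters \<circ> (par (blockwise f1) (blockwise f2) \<circ> map split_letter)) w"
      by (simp add: par_def split_letter_def comp_def)
  qed
qed

theorem cp_blockwise: "cp X Y f \<Longrightarrow> cp (block_alph X D) (block_alph Y D) (blockwise f)"
proof (induction rule: cp.induct)
  case (prime_hom S T h)
  then show ?case by (rule cp_blockwise_map)
next
  case (prime_mealy S T Q q0 \<delta>)
  then show ?case by (rule cp_blockwise_mealy)
next
  case prime_prop
  show ?case by (rule cp_blockwise_propagate)
next
  case (comp_seq S T f U g)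
  show ?case
    by (rule cp_cong[OF cp.comp_seq[OF comp_seq.IH]])
      (use blockwise_comp[OF comp_seq.hyps(1)] in \<open>simp add: comp_def\<close>)
next
  case (comp_par S1 T1 f1 S2 T2 f2)
  then show ?case by (rule cp_blockwise_par)
next
  case (ext_dom S T f g)
  show ?case
    by (rule cp_cong[OF ext_dom.IH]) (rule blockwise_cong[OF ext_dom.hyps(2)])
qed

lemma fst_splitD_nonempty: "fst (splitD w) \<noteq> []"
  by (induction w) (auto split: prod.splits)

lemma splitD_all_isL: "\<forall>x\<in>set b. isL x \<Longrightarrow> splitD b = ([b], [])"
  by (induction b) auto

lemma splitD_append_separator:
  "\<forall>x\<in>set b. isL x \<Longrightarrow> \<not> isL a \<Longrightarrow>
     splitD (b @ a # rest) = (b # fst (splitD rest), a # snd (splitD rest))"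
  by (induction b) (auto split: prod.splits)

lemma mapD_all_isL: "\<forall>x\<in>set b. isL x \<Longrightarrow> mapD f b = map VInl (f (map unL b))"
  by (simp add: mapD_def splitD_all_isL)

lemma mapD_append_separator:
  assumes "\<forall>x\<in>set b. isL x" "\<not> isL a"
  shows "mapD f (b @ a # rest) = map VInl (f (map unL b)) @ a # mapD f rest"
proof -
  obtain c cs as where "splitD rest = (c # cs, as)"
    using fst_splitD_nonempty[of rest] by (metis list.exhaust prod.collapse)
  then show ?thesis
    unfolding mapD_def splitD_append_separator[OF assms] by simp
qed

lemma mapD'_all_isL: "\<forall>x\<in>set b. isL x \<Longrightarrow> mapD' f b = f b"
  by (simp add: mapD'_def splitD_all_isL)

lemma mapD'_append_separator:
  assumes "\<forall>x\<in>set b. isL x" "\<not> isL a"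
  shows "mapD' f (b @ a # rest) = f (b @ [a]) @ mapD' f rest"
proof -
  obtain bs as where "splitD rest = (bs, as)" "bs \<noteq> []"
    using fst_splitD_nonempty[of rest] by (metis prod.collapse)
  then show ?thesis
    unfolding mapD'_def splitD_append_separator[OF assms] by simp
qed

fun encode_map :: "val \<Rightarrow> val" where
  "encode_map (VInr d) = VInr (VInl (VInr d))"
| "encode_map x = x"

fun encode_sub :: "val \<Rightarrow> val" where
  "encode_sub (VInr d) = VInr (VInl (VInl d))"
| "encode_sub x = x"

definition encode_map' :: "val \<Rightarrow> val" where
  "encode_map' x = (if isL x then VInl x else VInr (VInr x))"

fun decode_sum :: "val \<Rightarrow> val" where
  "decode_sum (VInl y) = VInl y"
| "decode_sum (VInr (VInl (VInl d))) = VInr d"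
| "decode_sum (VInr (VInl (VInr d))) = VInr d"
| "decode_sum (VInr (VInr y)) = VInl y"
| "decode_sum x = x"

fun decode_payload :: "val \<Rightarrow> val" where
  "decode_payload (VInl y) = y"
| "decode_payload (VInr (VInl (VInl d))) = d"
| "decode_payload (VInr (VInl (VInr d))) = d"
| "decode_payload (VInr (VInr y)) = y"
| "decode_payload x = x"

lemma equivariant_encode_map: "equivariant_fun (PSum S D) (block_alph S D) encode_map"
  and equivariant_encode_sub: "equivariant_fun (PSum S D) (block_alph S D) encode_sub"
  and equivariant_encode_map': "equivariant_fun (PSum S D) (block_alph (PSum S D) G) encode_map'"
  by (auto simp: equivariant_fun_def encode_map'_def)

lemma equivariant_decode_sum: "equivariant_fun (block_alph G D) (PSum G D) decode_sum"
  and equivariant_decode_payload: "equivariant_fun (block_alph G G) G decode_payload"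
  by (rule equivariant_funI; erule elem_block_alph_cases; simp)+

lemma isL_kind: "isL x \<Longrightarrow> kind x = Datum"
  by (cases x) auto

lemma isL_no_block_end: "\<forall>x\<in>set b. isL x \<Longrightarrow> \<forall>x\<in>set b. \<not> ends_block x"
  by (simp add: isL_kind ends_block_def)

lemma data_of_all_isL: "\<forall>x\<in>set b. isL x \<Longrightarrow> data_of b = map unL b"
proof (induction b)
  case (Cons x b)
  then show ?case by (cases x) (auto simp: data_of_def carries_data_def)
qed (simp add: data_of_def)

lemma refill_all_isL: "\<forall>x\<in>set b. isL x \<Longrightarrow> length ys = length b \<Longrightarrow> refill ys b = map VInl ys"
proof (induction b arbitrary: ys)
  case (Cons x b)
  then show ?case by (cases ys) (auto simp: isL_kind carries_data_def retag_def)
qed simp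

lemma words_PSum_isL: "b \<in> words (PSum S D) \<Longrightarrow> \<forall>x\<in>set b. isL x \<Longrightarrow> map unL b \<in> words S"
  by (induction b) auto

lemma block_apply_all_isL:
  "\<forall>x\<in>set b. isL x \<Longrightarrow> length (f (map unL b)) = length b \<Longrightarrow>
     block_apply f b = map VInl (f (map unL b))"
  by (simp add: block_apply_def data_of_all_isL refill_all_isL)

lemma block_apply_snoc_separator:
  "\<not> carries_data r \<Longrightarrow> block_apply f (u @ [r]) = block_apply f u @ [r]"
  by (simp add: block_apply_def data_of_def refill_append)

lemma encode_map_isL: "\<forall>x\<in>set b. isL x \<Longrightarrow> map encode_map b = b"
  by (induction b) (auto elim: isL.elims)

lemma mapD_eq_blockwise:
  assumes f: "cp S G f"
  shows "w \<in> words (PSum S D) \<Longrightarrow> mapD f w = map decode_sum (blockwise f (map encode_map w))"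
proof (induction w rule: blocks_induct[where p = isL])
  case (1 b)
  have "length (f (map unL b)) = length b"
    using cp_imp_words[OF f words_PSum_isL[OF 1(2,1)]] by simp
  then show ?case
    using 1(1) by (simp add: mapD_all_isL encode_map_isL blockwise_last_block isL_no_block_end
        block_apply_all_isL)
next
  case (2 b a rest)
  have b: "b \<in> words (PSum S D)" and rest: "rest \<in> words (PSum S D)" and "elem (PSum S D) a"
    using 2(4) by auto
  then obtain d where a: "a = VInr d"
    using 2(2) by auto
  have len: "length (f (map unL b)) = length b"
    using cp_imp_words[OF f words_PSum_isL[OF b 2(1)]] by simp
  have "block_apply f (b @ [encode_map a]) = map VInl (f (map unL b)) @ [encode_map a]"
    using block_apply_all_isL[where f = f, OF 2(1) len] a
    by (simp add: block_apply_snoc_separator carries_data_def)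
  then have "blockwise f (map encode_map (b @ a # rest)) =
      map VInl (f (map unL b)) @ encode_map a # blockwise f (map encode_map rest)"
    using 2(1) a blockwise_block_end[OF isL_no_block_end[OF 2(1)], of "encode_map a"]
    by (simp add: encode_map_isL ends_block_def)
  then show ?case
    using mapD_append_separator[OF 2(1,2)] 2(3)[OF rest] a by simp
qed

lemma subD_eq_blockwise:
  assumes w: "w \<in> words (PSum S D)"
  shows "subD f w = map decode_sum (blockwise f (map encode_sub w))"
proof -
  have "\<forall>x\<in>set (map encode_sub w). \<not> ends_block x"
    using w by (induction w) (auto simp: ends_block_def)
  moreover have "data_of (map encode_sub w) = map unL (filter isL w)"
    using w by (induction w) (auto simp: data_of_def carries_data_def)
  moreover have "map decode_sum (refill ys (map encode_sub w)) = reinsert ys w" for ys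
    using w by (induction w arbitrary: ys) (auto simp: carries_data_def retag_def)
  ultimately show ?thesis
    by (simp add: subD_def blockwise_last_block block_apply_def)
qed

lemma decode_payload_refill:
  "\<forall>x\<in>set u. carries_data x \<Longrightarrow> length ys = length u \<Longrightarrow> map decode_payload (refill ys u) = ys"
proof (induction u arbitrary: ys)
  case (Cons x u)
  then show ?case by (cases ys) (auto simp: retag_def)
qed simp

lemma mapD'_eq_blockwise:
  assumes f: "cp (PSum S D) G f"
  shows "w \<in> words (PSum S D) \<Longrightarrow> mapD' f w = map decode_payload (blockwise f (map encode_map' w))"
proof (induction w rule: blocks_induct[where p = isL])
  case (1 b)
  have len: "length (f b) = length b"
    using cp_imp_words[OF f 1(2)] by simp
  have data: "data_of (map VInl b) = b"
    by (induction b) (auto simp: data_of_def carries_data_def)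
  have enc: "map encode_map' b = map VInl b"
    using 1(1) by (simp add: encode_map'_def)
  have "blockwise f (map encode_map' b) = refill (f b) (map VInl b)"
    unfolding enc using data by (simp add: blockwise_last_block block_apply_def ends_block_def)
  then show ?case
    using 1(1) len by (simp add: mapD'_all_isL decode_payload_refill carries_data_def)
next
  case (2 b a rest)
  let ?u = "map VInl b @ [VInr (VInr a)]"
  have rest: "rest \<in> words (PSum S D)" and ba: "b @ [a] \<in> words (PSum S D)"
    using 2(4) by auto
  have "length (f (b @ [a])) = length ?u"
    using cp_imp_words[OF f ba] by simp
  moreover have "data_of ?u = b @ [a]"
    by (induction b) (auto simp: data_of_def carries_data_def)
  moreover have "\<forall>x\<in>set ?u. carries_data x"
    by (auto simp: carries_data_def)
  ultimately have "map decode_payload (block_apply f ?u) = f (b @ [a])"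
    by (simp add: block_apply_def decode_payload_refill)
  moreover have "\<forall>x\<in>set (map VInl b). \<not> ends_block x"
    by (auto simp: ends_block_def)
  ultimately have "mapD' f (b @ a # rest) =
      map decode_payload (blockwise f (map VInl b @ VInr (VInr a) # map encode_map' rest))"
    using mapD'_append_separator[OF 2(1,2)] 2(3)[OF rest]
    by (simp add: blockwise_block_end ends_block_def)
  moreover have "map encode_map' (b @ a # rest) = map VInl b @ VInr (VInr a) # map encode_map' rest"
    using 2(1,2) by (simp add: encode_map'_def)
  ultimately show ?case
    by (simp only:)
qed

theorem mainTheorem12:
  fixes S G D :: pof and f :: "val list \<Rightarrow> val list"
  shows "(cp S G f \<longrightarrow> cp (PSum S D) (PSum G D) (mapD f) \<and> cp (PSum S D) (PSum G D) (subD f))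
       \<and> (cp (PSum S D) G f \<longrightarrow> cp (PSum S D) G (mapD' f))"
proof (intro conjI impI)
  assume f: "cp S G f"
  then have blockwise_f: "cp (block_alph S D) (block_alph G D) (blockwise f)"
    by (rule cp_blockwise)
  show "cp (PSum S D) (PSum G D) (mapD f)"
    using blockwise_f equivariant_encode_map equivariant_decode_sum mapD_eq_blockwise[OF f]
    by (rule cp_conjugate)
  show "cp (PSum S D) (PSum G D) (subD f)"
    using blockwise_f equivariant_encode_sub equivariant_decode_sum subD_eq_blockwise
    by (rule cp_conjugate)
next
  assume f: "cp (PSum S D) G f"
  then have "cp (block_alph (PSum S D) G) (block_alph G G) (blockwise f)"
    by (rule cp_blockwise)
  then show "cp (PSum S D) G (mapD' f)"
    using equivariant_encode_map' equivariant_decode_payload mapD'_eq_blockwise[OF f]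
    by (rule cp_conjugate)
qed

end
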